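(* Assume in addition the convexity condition: $\big(\partial_a+[(1-\alpha)\mathcal{A}(0)+\alpha\mathcal{A}(u)],\gamma_0\big)\in\mathrm{Isom}(\mathbb{E}_1,\mathbb{E}_0\times E_\varsigma)$ for all $u\in\Sigma_1$ and $\alpha\in[0,1]$. Then for all $(\lambda,u)\in\mathbb{R}\times\Sigma_1$ and $\alpha\in[0,1]$, the operator $(1-\alpha)F_u(\lambda,0)+\alpha F_u(\lambda,u)\in\mathcal{L}(\mathbb{E}_1)$ is Fredholm of index zero.
   Context: $E_0$ is a real Banach space ordered by a closed convex cone $E_0^+$, $E_1$ a Banach space densely and compactly embedded in $E_0$. Fix $p\in(1,\infty)$, $\varsigma:=1-1/p$, $E_\varsigma:=(E_0,E_1)_{\varsigma,p}$ (real interpolation); for $\theta\in(0,1)\setminus\{\varsigma\}$, $E_\theta:=(E_0,E_1)_\theta$ with an admissible interpolation functor ($E_1$ dense in $E_\theta$), $E_\theta^+:=E_\theta\cap E_0^+$, and $\mathrm{int}(E_\varsigma^+)\neq\emptyset$. $a_m\in(0,\infty]$, $J:=[0,a_m)$, $\mathbb{E}_0:=L_p(J,E_0)$, $\mathbb{E}_1:=L_p(J,E_1)\cap W^1_p(J,E_0)$, $\gamma_0u:=u(0)$, $\gamma_0\in\mathcal{L}(\mathbb{E}_1,E_\varsigma)$, $\mathbb{E}_1^+:=L_p^+(J,E_1)\cap W_p^1(J,E_0)$. $\mathbb{F}$ is a Banach space with $\mathbb{E}_1$ compactly embedded in $\mathbb{F}$, $\Sigma$ an open connected $0$-neighbourhood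 in $\mathbb{F}$, $\Sigma_1:=\Sigma\cap\mathbb{E}_1$. For some $\vartheta\in(\varsigma,1]$: $\mathcal{A}\in C^1(\Sigma,\mathcal{L}(\mathbb{E}_1,\mathbb{E}_0))$, $\ell\in C^1(\Sigma,\mathcal{L}(\mathbb{E}_1,E_\vartheta))$. Standing assumptions: for all $u\in\Sigma_1$, $(\partial_a+\mathcal{A}(u),\gamma_0)\in\mathrm{Isom}(\mathbb{E}_1,\mathbb{E}_0\times E_\varsigma)$ with inverse $T[u]$, and $T[u](0,\cdot)$ maps $E_\varsigma^+$ into $\mathbb{E}_1^+$; $Q(u):=\ell(u)T[u](0,\cdot)$; $\lambda_0^{-1}>0$ is a simple eigenvalue of $Q(0)$ with an eigenvector $\Phi_0\in\mathrm{int}(E_\varsigma^+)$, and $Q(0)$ has no other eigenvalue with eigenvector in $E_\varsigma^+$. $S:=T[0]$ and $F(\lambda,u):=u-S\big((\mathcal{A}(0)-\mathcal{A}(u))u,\lambda\ell(u)u\big)$ for $(\lambda,u)\in\mathbb{R}\times\Sigma_1$; $F_u$ is its Fréchet derivative in $u$. *)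

theory Defs
  imports "HOL-Analysis.Analysis"
begin

definition isom :: "('a::real_normed_vector \<Rightarrow> 'b::real_normed_vector) \<Rightarrow> bool" where
  "isom T \<longleftrightarrow> bounded_linear T \<and> bij T \<and> bounded_linear (inv T)"

definition compact_op :: "('a::real_normed_vector \<Rightarrow> 'b::real_normed_vector) \<Rightarrow> bool" where
  "compact_op T \<longleftrightarrow> bounded_linear T \<and> (\<forall>B. bounded B \<longrightarrow> compact (closure (T ` B)))"

definition compact_embedding :: "('a::real_normed_vector \<Rightarrow> 'b::real_normed_vector) \<Rightarrow> bool" where
  "compact_embedding i \<longleftrightarrow> compact_op i \<and> inj i"

definition fredholm_index_zero :: "('a::banach \<Rightarrow> 'a) \<Rightarrow> bool" where
  "fredholm_index_zero T \<longleftrightarrow> bounded_linear T \<and> closed (range T) \<and>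
     (\<exists>B C. finite B \<and> independent B \<and> span B = {x. T x = 0} \<and>
            finite C \<and> independent C \<and> span C \<inter> range T = {0} \<and>
            span C + range T = UNIV \<and> card B = card C)"

text \<open>Here \<iota> embeds the parabolic space E1 into F and j embeds
  E_\<vartheta> into E_\<varsigma>.\<close>
definition S_op :: "('e1::real_normed_vector \<Rightarrow>\<^sub>L 'e0::real_normed_vector) \<Rightarrow> ('e1 \<Rightarrow>\<^sub>L 'es::real_normed_vector)
     \<Rightarrow> ('f \<Rightarrow> ('e1 \<Rightarrow>\<^sub>L 'e0)) \<Rightarrow> ('f::real_normed_vector) \<Rightarrow> ('e0 \<times> 'es \<Rightarrow> 'e1)" where
  "S_op D \<gamma>0 A z = inv (\<lambda>h. (D h + A z h, \<gamma>0 h))"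

definition F_map :: "('e1::real_normed_vector \<Rightarrow>\<^sub>L 'e0::real_normed_vector) \<Rightarrow> ('e1 \<Rightarrow>\<^sub>L 'es::real_normed_vector)
     \<Rightarrow> ('f::real_normed_vector \<Rightarrow> ('e1 \<Rightarrow>\<^sub>L 'e0)) \<Rightarrow> ('f \<Rightarrow> ('e1 \<Rightarrow>\<^sub>L 'et::real_normed_vector))
     \<Rightarrow> ('e1 \<Rightarrow> 'f) \<Rightarrow> ('et \<Rightarrow> 'es) \<Rightarrow> real \<Rightarrow> 'e1 \<Rightarrow> 'e1" where
  "F_map D \<gamma>0 A l \<iota> j lam u =
     u - S_op D \<gamma>0 A 0 ((A 0 - A (\<iota> u)) u, lam *\<^sub>R j (l (\<iota> u) u))"

end

(*
  Write S for the inverse of (d/da + A(0), gamma_0).  Expanding the definition of F gives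

    (1 - alpha) F_u(lambda, 0) + alpha F_u(lambda, u)
      = S (d/da + (1 - alpha) A(0) + alpha A(u), gamma_0) - S P,

  where P collects the terms containing A'(u) or l, all of which factor through one of the
  compact embeddings E_1 -> F and E_theta -> E_varsigma.  By the convexity hypothesis the first
  operator Q is an isomorphism, so the combination is Q (I - Q^-1 S P) with Q^-1 S P compact.

  That I - K is Fredholm of index zero for compact K is Riesz--Schauder theory: Riesz's lemma
  forces the kernels and the ranges of (I - K)^n to become stationary, so that the space is the
  direct sum of N((I - K)^m) and R((I - K)^m); both summands are invariant under I - K, the first
  is finite-dimensional, and on it the index vanishes by rank--nullity.
*)
theory Submission
  imports Defs
begin

section \<open>Compact operators\<close>

lemma compact_op_imp_bounded_linear: "compact_op K \<Longrightarrow> bounded_linear K"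
  by (simp add: compact_op_def)

lemma compact_closure_of_subset:
  fixes X :: "'a::metric_space set"
  assumes "X \<subseteq> C" "compact C"
  shows "compact (closure X)"
proof -
  have "closure X = C \<inter> closure X"
    using assms closure_minimal compact_imp_closed by blast
  then show ?thesis
    by (metis compact_Int_closed closed_closure assms(2))
qed

lemma compact_op_convergent_subseq:
  fixes K :: "'a::real_normed_vector \<Rightarrow> 'b::real_normed_vector" and x :: "nat \<Rightarrow> 'a"
  assumes K: "compact_op K" and bnd: "\<And>n. norm (x n) \<le> M"
  obtains l r where "strict_mono r" "(\<lambda>n. K (x (r n))) \<longlonglongrightarrow> l"
proof -
  have "bounded (range x)"
    unfolding bounded_iff using bnd by blast
  then have "seq_compact (closure (K ` range x))"
    using K compact_imp_seq_compact unfolding compact_op_def by blast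
  moreover have "\<forall>n. K (x n) \<in> closure (K ` range x)"
    by (auto intro: closure_subset[THEN subsetD])
  ultimately obtain l r where "strict_mono r" "((\<lambda>n. K (x n)) \<circ> r) \<longlonglongrightarrow> l"
    by (rule seq_compactE)
  then show thesis
    using that by (simp add: o_def)
qed

lemma compact_op_compose_left:
  fixes K :: "'a::real_normed_vector \<Rightarrow> 'b::real_normed_vector"
    and L :: "'b \<Rightarrow> 'c::real_normed_vector"
  assumes L: "bounded_linear L" and K: "compact_op K"
  shows "compact_op (\<lambda>x. L (K x))"
  unfolding compact_op_def
proof safe
  show "bounded_linear (\<lambda>x. L (K x))"
    using bounded_linear_compose[OF L compact_op_imp_bounded_linear[OF K]] .
  fix B :: "'a set"
  assume "bounded B"
  have "(\<lambda>x. L (K x)) ` B = L ` K ` B"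
    by (simp add: image_image)
  then have "(\<lambda>x. L (K x)) ` B \<subseteq> L ` closure (K ` B)"
    by (simp add: image_mono closure_subset)
  moreover have "compact (closure (K ` B))"
    using K \<open>bounded B\<close> unfolding compact_op_def by blast
  then have "compact (L ` closure (K ` B))"
    by (rule compact_continuous_image[OF linear_continuous_on[OF L]])
  ultimately show "compact (closure ((\<lambda>x. L (K x)) ` B))"
    by (rule compact_closure_of_subset)
qed

lemma compact_op_compose_right:
  fixes L :: "'a::real_normed_vector \<Rightarrow> 'b::real_normed_vector"
    and K :: "'b \<Rightarrow> 'c::real_normed_vector"
  assumes L: "bounded_linear L" and K: "compact_op K"
  shows "compact_op (\<lambda>x. K (L x))"
  unfolding compact_op_def
proof safe
  show "bounded_linear (\<lambda>x. K (L x))"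
    using bounded_linear_compose[OF compact_op_imp_bounded_linear[OF K] L] .
  fix B :: "'a set"
  assume "bounded B"
  then have "bounded (L ` B)"
    using L by (rule bounded_linear_image)
  then have "compact (closure (K ` L ` B))"
    using K unfolding compact_op_def by blast
  then show "compact (closure ((\<lambda>x. K (L x)) ` B))"
    by (simp add: image_image)
qed

lemma compact_op_add:
  fixes K1 K2 :: "'a::real_normed_vector \<Rightarrow> 'b::real_normed_vector"
  assumes K1: "compact_op K1" and K2: "compact_op K2"
  shows "compact_op (\<lambda>x. K1 x + K2 x)"
  unfolding compact_op_def
proof safe
  show "bounded_linear (\<lambda>x. K1 x + K2 x)"
    using K1 K2 by (intro bounded_linear_add compact_op_imp_bounded_linear)
  fix B :: "'a set"
  assume "bounded B"
  let ?S = "{x + y |x y. x \<in> closure (K1 ` B) \<and> y \<in> closure (K2 ` B)}"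
  have "(\<lambda>x. K1 x + K2 x) ` B \<subseteq> ?S"
    by (blast intro: closure_subset[THEN subsetD])
  moreover have "compact ?S"
    using K1 K2 \<open>bounded B\<close> unfolding compact_op_def by (blast intro: compact_sums)
  ultimately show "compact (closure ((\<lambda>x. K1 x + K2 x) ` B))"
    by (rule compact_closure_of_subset)
qed

lemma compact_op_Pair:
  fixes K1 :: "'a::real_normed_vector \<Rightarrow> 'b::real_normed_vector"
    and K2 :: "'a \<Rightarrow> 'c::real_normed_vector"
  assumes K1: "compact_op K1" and K2: "compact_op K2"
  shows "compact_op (\<lambda>x. (K1 x, K2 x))"
  unfolding compact_op_def
proof safe
  show "bounded_linear (\<lambda>x. (K1 x, K2 x))"
    using K1 K2 by (intro bounded_linear_Pair compact_op_imp_bounded_linear)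
  fix B :: "'a set"
  assume "bounded B"
  have "(\<lambda>x. (K1 x, K2 x)) ` B \<subseteq> closure (K1 ` B) \<times> closure (K2 ` B)"
    by (blast intro: closure_subset[THEN subsetD])
  moreover have "compact (closure (K1 ` B) \<times> closure (K2 ` B))"
    using K1 K2 \<open>bounded B\<close> unfolding compact_op_def by (blast intro: compact_Times)
  ultimately show "compact (closure ((\<lambda>x. (K1 x, K2 x)) ` B))"
    by (rule compact_closure_of_subset)
qed

lemma compact_op_zero: "compact_op (\<lambda>x::'a::real_normed_vector. 0::'b::real_normed_vector)"
  unfolding compact_op_def
proof safe
  fix B :: "'a set"
  have "(\<lambda>x. 0::'b) ` B \<subseteq> {0}"
    by blast
  then show "compact (closure ((\<lambda>x. 0::'b) ` B))"
    by (rule compact_closure_of_subset) simp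
qed simp

lemma compact_op_no_separated_sequence:
  fixes K :: "'a::real_normed_vector \<Rightarrow> 'b::real_normed_vector" and x :: "nat \<Rightarrow> 'a"
  assumes K: "compact_op K" and bnd: "\<And>n. norm (x n) \<le> M" and "e > 0"
    and sep: "\<And>m n. m < n \<Longrightarrow> e \<le> norm (K (x m) - K (x n))"
  shows False
proof -
  obtain l r where r: "strict_mono r" and lim: "(\<lambda>n. K (x (r n))) \<longlonglongrightarrow> l"
    using compact_op_convergent_subseq[OF K bnd] .
  from lim have "Cauchy (\<lambda>n. K (x (r n)))"
    by (rule LIMSEQ_imp_Cauchy)
  then obtain N where "\<forall>m\<ge>N. \<forall>n\<ge>N. norm (K (x (r m)) - K (x (r n))) < e"
    using CauchyD[OF _ \<open>e > 0\<close>] by blast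
  then have "norm (K (x (r N)) - K (x (r (Suc N)))) < e"
    by simp
  moreover have "e \<le> norm (K (x (r N)) - K (x (r (Suc N))))"
    using r by (intro sep) (simp add: strict_mono_def)
  ultimately show False
    by simp
qed

section \<open>Riesz's lemma\<close>

lemma exists_point_within_twice_infdist:
  fixes N :: "'a::real_normed_vector set"
  assumes "closed N" "N \<noteq> {}"
  shows "\<exists>z\<in>N. norm (x - z) \<le> 2 * infdist x N"
proof (cases "infdist x N = 0")
  case True
  then have "x \<in> N"
    using in_closed_iff_infdist_zero[OF assms] by blast
  then show ?thesis
    by force
next
  case False
  then have "(INF a\<in>N. dist x a) < 2 * infdist x N"
    using infdist_nonneg[of x N] infdist_notempty[OF assms(2)] by simp
  moreover have "bdd_below ((\<lambda>a. dist x a) ` N)"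
    by (rule bdd_belowI[of _ 0]) auto
  ultimately obtain z where "z \<in> N" "dist x z < 2 * infdist x N"
    using cINF_less_iff[OF assms(2)] by blast
  then show ?thesis
    by (auto simp: dist_norm intro!: bexI[of _ z])
qed

lemma scaled_representative_far_from_subspace:
  fixes N :: "'a::real_normed_vector set"
  assumes N: "subspace N" "closed N" and "x \<notin> N"
  shows "\<exists>z\<in>N. norm ((1 / infdist x N) *\<^sub>R (x - z)) \<le> 2 \<and>
    (\<forall>a\<in>N. 1 \<le> norm ((1 / infdist x N) *\<^sub>R (x - z) - a))"
proof -
  have "N \<noteq> {}"
    using N(1) subspace_0 by blast
  define d where "d = infdist x N"
  have "d > 0"
    unfolding d_def using N(2) \<open>N \<noteq> {}\<close> \<open>x \<notin> N\<close> by (rule infdist_pos_not_in_closed)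
  obtain z where z: "z \<in> N" "norm (x - z) \<le> 2 * d"
    using exists_point_within_twice_infdist[OF N(2) \<open>N \<noteq> {}\<close>] unfolding d_def by blast
  have "norm ((1 / d) *\<^sub>R (x - z)) \<le> 2"
    using z(2) \<open>d > 0\<close> by (simp add: pos_divide_le_eq mult.commute)
  moreover have "1 \<le> norm ((1 / d) *\<^sub>R (x - z) - a)" if "a \<in> N" for a
  proof -
    have "z + d *\<^sub>R a \<in> N"
      using N(1) z(1) \<open>a \<in> N\<close> by (simp add: subspace_add subspace_scale)
    then have "d \<le> dist x (z + d *\<^sub>R a)"
      unfolding d_def by (rule infdist_le)
    moreover have "x - (z + d *\<^sub>R a) = d *\<^sub>R ((1 / d) *\<^sub>R (x - z) - a)"
      using \<open>d > 0\<close> by (simp add: algebra_simps)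
    ultimately have "d * 1 \<le> d * norm ((1 / d) *\<^sub>R (x - z) - a)"
      using \<open>d > 0\<close> by (simp add: dist_norm)
    then show ?thesis
      using \<open>d > 0\<close> by (simp only: mult_le_cancel_left_pos)
  qed
  ultimately show ?thesis
    using z(1) unfolding d_def by blast
qed

lemma riesz_lemma:
  fixes Y W :: "'a::real_normed_vector set"
  assumes Y: "subspace Y" "closed Y" and W: "subspace W" "Y \<subset> W"
  shows "\<exists>x\<in>W. norm x = 1 \<and> (\<forall>y\<in>Y. 1/2 \<le> norm (x - y))"
proof -
  obtain w where w: "w \<in> W" "w \<notin> Y"
    using W(2) by blast
  then obtain z where z: "z \<in> Y" and v: "norm ((1 / infdist w Y) *\<^sub>R (w - z)) \<le> 2"
    "\<And>a. a \<in> Y \<Longrightarrow> 1 \<le> norm ((1 / infdist w Y) *\<^sub>R (w - z) - a)"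
    using scaled_representative_far_from_subspace[OF Y] by blast
  define v where "v = (1 / infdist w Y) *\<^sub>R (w - z)"
  have "1 \<le> norm v"
    using v(2)[OF subspace_0[OF Y(1)]] unfolding v_def by simp
  define x where "x = (1 / norm v) *\<^sub>R v"
  have "v \<in> W"
    unfolding v_def using w(1) z W by (intro subspace_scale subspace_diff) auto
  then have "x \<in> W"
    unfolding x_def by (rule subspace_scale[OF W(1)])
  moreover have "v \<noteq> 0"
    using \<open>1 \<le> norm v\<close> by auto
  then have "norm x = 1"
    unfolding x_def by simp
  moreover have "1/2 \<le> norm (x - y)" if "y \<in> Y" for y
  proof -
    have "1 \<le> norm (v - norm v *\<^sub>R y)"
      using v(2) Y(1) \<open>y \<in> Y\<close> unfolding v_def by (simp add: subspace_scale)
    also have "v - norm v *\<^sub>R y = norm v *\<^sub>R (x - y)"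
      using \<open>1 \<le> norm v\<close> unfolding x_def by (simp add: algebra_simps)
    finally have "1 \<le> norm v * norm (x - y)"
      by simp
    moreover have "norm v * norm (x - y) \<le> 2 * norm (x - y)"
      using v(1) unfolding v_def[symmetric] by (simp add: mult_right_mono)
    ultimately show ?thesis
      by linarith
  qed
  ultimately show ?thesis
    by blast
qed

text \<open>A chain of closed subspaces along which \<open>I - K\<close> moves one step cannot be strictly
  monotone: Riesz's lemma would produce a bounded sequence with \<open>1/2\<close>-separated \<open>K\<close>-images.\<close>

lemma id_minus_compact_op_ascending_chain_stationary:
  fixes K :: "'a::real_normed_vector \<Rightarrow> 'a" and Y :: "nat \<Rightarrow> 'a set"
  assumes K: "compact_op K"
    and Y: "\<And>n. subspace (Y n)" "\<And>n. closed (Y n)" "\<And>n. Y n \<subseteq> Y (Suc n)"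
    and shift: "\<And>n x. x \<in> Y (Suc n) \<Longrightarrow> x - K x \<in> Y n"
  shows "\<exists>n. Y (Suc n) = Y n"
proof (rule ccontr)
  assume "\<nexists>n. Y (Suc n) = Y n"
  then have "Y n \<subset> Y (Suc n)" for n
    using Y(3) by blast
  then have "\<exists>x\<in>Y (Suc n). norm x = 1 \<and> (\<forall>y\<in>Y n. 1/2 \<le> norm (x - y))" for n
    by (rule riesz_lemma[OF Y(1,2) Y(1)])
  then obtain x where x: "\<And>n. x n \<in> Y (Suc n)" "\<And>n. norm (x n) = 1"
    "\<And>n y. y \<in> Y n \<Longrightarrow> 1/2 \<le> norm (x n - y)"
    by metis
  have mono: "m \<le> n \<Longrightarrow> Y m \<subseteq> Y n" for m n
    by (rule lift_Suc_mono_le[of Y, OF Y(3)])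
  show False
  proof (rule compact_op_no_separated_sequence[OF K, of x 1 "1/2"])
    fix m n :: nat
    assume "m < n"
    then have "x m \<in> Y n" "x m - K (x m) \<in> Y n"
      using x(1)[of m] shift[OF x(1)[of m]] mono[of "Suc m" n] mono[of m n] by auto
    then have "K (x m) \<in> Y n"
      using subspace_diff[OF Y(1)] by fastforce
    then have "K (x m) + (x n - K (x n)) \<in> Y n"
      using shift[OF x(1)[of n]] by (rule subspace_add[OF Y(1)])
    then have "1/2 \<le> norm (x n - (K (x m) + (x n - K (x n))))"
      by (rule x(3))
    then show "1/2 \<le> norm (K (x m) - K (x n))"
      by (simp add: norm_minus_commute)
  qed (use x(2) in auto)
qed

lemma id_minus_compact_op_descending_chain_stationary:
  fixes K :: "'a::real_normed_vector \<Rightarrow> 'a" and Y :: "nat \<Rightarrow> 'a set"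
  assumes K: "compact_op K"
    and Y: "\<And>n. subspace (Y n)" "\<And>n. closed (Y n)" "\<And>n. Y (Suc n) \<subseteq> Y n"
    and shift: "\<And>n x. x \<in> Y n \<Longrightarrow> x - K x \<in> Y (Suc n)"
  shows "\<exists>n. Y (Suc n) = Y n"
proof (rule ccontr)
  assume "\<nexists>n. Y (Suc n) = Y n"
  then have "Y (Suc n) \<subset> Y n" for n
    using Y(3) by blast
  then have "\<exists>x\<in>Y n. norm x = 1 \<and> (\<forall>y\<in>Y (Suc n). 1/2 \<le> norm (x - y))" for n
    by (rule riesz_lemma[OF Y(1,2) Y(1)])
  then obtain x where x: "\<And>n. x n \<in> Y n" "\<And>n. norm (x n) = 1"
    "\<And>n y. y \<in> Y (Suc n) \<Longrightarrow> 1/2 \<le> norm (x n - y)"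
    by metis
  have mono: "m \<le> n \<Longrightarrow> Y n \<subseteq> Y m" for m n
    by (rule lift_Suc_antimono_le[of Y, OF Y(3)])
  show False
  proof (rule compact_op_no_separated_sequence[OF K, of x 1 "1/2"])
    fix m n :: nat
    assume "m < n"
    then have "x n \<in> Y (Suc m)" "x n - K (x n) \<in> Y (Suc m)"
      using x(1)[of n] shift[OF x(1)[of n]] mono[of "Suc m" n] mono[of "Suc m" "Suc n"] by auto
    then have "K (x n) \<in> Y (Suc m)"
      using subspace_diff[OF Y(1)] by fastforce
    then have "K (x n) + (x m - K (x m)) \<in> Y (Suc m)"
      using shift[OF x(1)[of m]] by (rule subspace_add[OF Y(1)])
    then have "1/2 \<le> norm (x m - (K (x n) + (x m - K (x m))))"
      by (rule x(3))
    then show "1/2 \<le> norm (K (x m) - K (x n))"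
      by simp
  qed (use x(2) in auto)
qed

section \<open>Finite-dimensional fixed spaces and closed ranges\<close>

lemma abs_scaleR_infdist_le_norm_add:
  fixes b s :: "'a::real_normed_vector"
  assumes V: "subspace V" and "s \<in> V"
  shows "\<bar>t\<bar> * infdist b V \<le> norm (t *\<^sub>R b + s)"
proof (cases "t = 0")
  case False
  have "- ((1/t) *\<^sub>R s) \<in> V"
    using V \<open>s \<in> V\<close> by (simp add: subspace_neg subspace_scale)
  then have "infdist b V \<le> dist b (- ((1/t) *\<^sub>R s))"
    by (rule infdist_le)
  moreover have "b - - ((1/t) *\<^sub>R s) = (1/t) *\<^sub>R (t *\<^sub>R b + s)"
    using False by (simp add: algebra_simps)
  then have "dist b (- ((1/t) *\<^sub>R s)) = norm (t *\<^sub>R b + s) / \<bar>t\<bar>"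
    by (simp add: dist_norm)
  ultimately show ?thesis
    using False by (simp add: field_simps)
qed simp

lemma closed_span_insert:
  fixes S :: "'a::real_normed_vector set"
  assumes S: "closed (span S)" and "b \<notin> span S"
  shows "closed (span (insert b S))"
  unfolding closed_sequential_limits
proof (intro allI impI, elim conjE)
  define d where "d = infdist b (span S)"
  have "d > 0"
    unfolding d_def using S \<open>b \<notin> span S\<close> span_zero by (intro infdist_pos_not_in_closed) auto
  fix y :: "nat \<Rightarrow> 'a" and l
  assume y: "\<forall>n. y n \<in> span (insert b S)" and lim: "y \<longlonglongrightarrow> l"
  have "\<forall>n. \<exists>t. y n - t *\<^sub>R b \<in> span S"
    using y by (simp add: span_breakdown_eq)
  then obtain t where t: "\<And>n. y n - t n *\<^sub>R b \<in> span S"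
    by metis
  obtain M where M: "\<And>n. norm (y n) \<le> M"
    using convergent_imp_bounded[OF lim] unfolding bounded_iff by blast
  have "\<bar>t n\<bar> * d \<le> M" for n
    using abs_scaleR_infdist_le_norm_add[OF subspace_span t[of n], of "t n" b] M[of n]
    unfolding d_def by simp
  then have "\<bar>t n\<bar> \<le> M / d" for n
    using \<open>d > 0\<close> by (simp add: field_simps)
  then have "bounded (range t)"
    unfolding bounded_iff by (intro exI[of _ "M / d"]) auto
  then obtain tl r where r: "strict_mono r" and tlim: "(t \<circ> r) \<longlonglongrightarrow> tl"
    using bounded_imp_convergent_subsequence by blast
  have "(\<lambda>n. y (r n)) \<longlonglongrightarrow> l"
    using LIMSEQ_subseq_LIMSEQ[OF lim r] by (simp add: o_def)
  moreover have "(\<lambda>n. t (r n)) \<longlonglongrightarrow> tl"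
    using tlim by (simp add: o_def)
  ultimately have ylim: "(\<lambda>n. y (r n) - t (r n) *\<^sub>R b) \<longlonglongrightarrow> l - tl *\<^sub>R b"
    by (intro tendsto_intros)
  have "y (r n) - t (r n) *\<^sub>R b \<in> span S" for n
    using t .
  then have "l - tl *\<^sub>R b \<in> span S"
    using ylim by (rule closed_sequentially[OF S])
  then show "l \<in> span (insert b S)"
    unfolding span_breakdown_eq by blast
qed

lemma closed_span_finite:
  fixes S :: "'a::real_normed_vector set"
  assumes "finite S"
  shows "closed (span S)"
  using assms
proof (induction S rule: finite_induct)
  case (insert b S)
  then show ?case
    by (cases "b \<in> span S") (simp_all add: span_redundant closed_span_insert)
qed simp

lemma compact_op_fixed_subspace_independent_finite:
  fixes K :: "'a::real_normed_vector \<Rightarrow> 'a"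
  assumes K: "compact_op K" and N: "subspace N" and fixed: "\<And>x. x \<in> N \<Longrightarrow> K x = x"
    and B: "B \<subseteq> N" "independent B"
  shows "finite B"
proof (rule ccontr)
  assume "infinite B"
  then obtain b :: "nat \<Rightarrow> 'a" where b: "inj b" "range b \<subseteq> B"
    using infinite_countable_subset by blast
  define Y where "Y n = span (b ` {..<n})" for n
  have "\<exists>n. Y (Suc n) = Y n"
  proof (rule id_minus_compact_op_ascending_chain_stationary[OF K])
    fix n
    show "subspace (Y n)"
      unfolding Y_def by (rule subspace_span)
    show "closed (Y n)"
      unfolding Y_def by (rule closed_span_finite) simp
    show "Y n \<subseteq> Y (Suc n)"
      unfolding Y_def by (intro span_mono image_mono) auto
    fix x
    assume "x \<in> Y (Suc n)"
    moreover have "Y (Suc n) \<subseteq> N"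
      unfolding Y_def using b(2) B(1) by (intro span_minimal[OF _ N]) auto
    ultimately have "x \<in> N"
      by blast
    then show "x - K x \<in> Y n"
      using fixed span_zero unfolding Y_def by simp
  qed
  then obtain n where "Y (Suc n) = Y n"
    by blast
  moreover have "b n \<in> Y (Suc n)"
    unfolding Y_def by (intro span_base) simp
  ultimately have "b n \<in> span (b ` {..<n})"
    unfolding Y_def by simp
  moreover have "b ` {..<n} \<subseteq> B - {b n}"
    using b(2) by (auto simp: inj_eq[OF b(1)])
  ultimately have "b n \<in> span (B - {b n})"
    using span_mono by blast
  then have "dependent B"
    unfolding dependent_def using b(2) by blast
  then show False
    using B(2) by blast
qed

lemma compact_op_fixed_subspace_finite_basis:
  fixes K :: "'a::real_normed_vector \<Rightarrow> 'a"
  assumes K: "compact_op K" and N: "subspace N" and fixed: "\<And>x. x \<in> N \<Longrightarrow> K x = x"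
  obtains B where "finite B" "independent B" "span B = N"
proof -
  obtain B where B: "B \<subseteq> N" "independent B" "N \<subseteq> span B"
    by (rule maximal_independent_subset)
  have "span B = N"
    using B N span_minimal by blast
  moreover have "finite B"
    using K N fixed B(1,2) by (rule compact_op_fixed_subspace_independent_finite)
  ultimately show thesis
    using B(2) that by blast
qed

lemma id_minus_compact_op_bounded_sequence_limit:
  fixes K :: "'a::real_normed_vector \<Rightarrow> 'a" and x :: "nat \<Rightarrow> 'a"
  assumes K: "compact_op K" and bnd: "\<And>n. norm (x n) \<le> M"
    and lim: "(\<lambda>n. x n - K (x n)) \<longlonglongrightarrow> y"
  obtains r u where "strict_mono r" "(\<lambda>n. x (r n)) \<longlonglongrightarrow> u" "u - K u = y"
proof -
  interpret K: bounded_linear K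
    using K by (rule compact_op_imp_bounded_linear)
  obtain k r where r: "strict_mono r" and Kx: "(\<lambda>n. K (x (r n))) \<longlonglongrightarrow> k"
    using compact_op_convergent_subseq[OF K bnd] .
  have "(\<lambda>n. (x (r n) - K (x (r n))) + K (x (r n))) \<longlonglongrightarrow> y + k"
    using LIMSEQ_subseq_LIMSEQ[OF lim r] Kx by (intro tendsto_add) (auto simp: o_def)
  then have xr: "(\<lambda>n. x (r n)) \<longlonglongrightarrow> y + k"
    by simp
  then have "(\<lambda>n. K (x (r n))) \<longlonglongrightarrow> K (y + k)"
    by (rule K.tendsto)
  then have "K (y + k) = k"
    using Kx LIMSEQ_unique by blast
  then show thesis
    using that[OF r xr] by simp
qed

lemma closed_kernel_bounded_linear:
  fixes T :: "'a::real_normed_vector \<Rightarrow> 'b::real_normed_vector"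
  assumes "bounded_linear T"
  shows "closed {x. T x = 0}"
  using closed_Collect_eq[OF linear_continuous_on[OF assms] continuous_on_const] .

lemma id_minus_compact_op_approximate_kernel_not_separated:
  fixes K :: "'a::real_normed_vector \<Rightarrow> 'a" and v :: "nat \<Rightarrow> 'a"
  assumes K: "compact_op K" and bnd: "\<And>n. norm (v n) \<le> M"
    and approx: "(\<lambda>n. v n - K (v n)) \<longlonglongrightarrow> 0"
    and far: "\<And>n a. a - K a = 0 \<Longrightarrow> e \<le> norm (v n - a)" and "e > 0"
  shows False
proof -
  obtain r u where "strict_mono r" and vr: "(\<lambda>n. v (r n)) \<longlonglongrightarrow> u" and "u - K u = 0"
    using id_minus_compact_op_bounded_sequence_limit[OF K bnd approx] .
  then have "\<And>n. e \<le> norm (v (r n) - u)"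
    using far by blast
  moreover obtain n where "norm (v (r n) - u) < e"
    using LIMSEQ_D[OF vr \<open>e > 0\<close>] by blast
  ultimately show False
    by (meson not_le)
qed

lemma id_minus_compact_op_infdist_kernel_le:
  fixes K :: "'a::real_normed_vector \<Rightarrow> 'a"
  assumes K: "compact_op K"
  obtains C where "\<And>x. infdist x {x. x - K x = 0} \<le> C * norm (x - K x)"
proof -
  interpret K: bounded_linear K
    using K by (rule compact_op_imp_bounded_linear)
  have T: "bounded_linear (\<lambda>x. x - K x)"
    by (intro bounded_linear_sub bounded_linear_ident K.bounded_linear)
  define N where "N = {x. x - K x = 0}"
  have N: "subspace N" "closed N"
    unfolding N_def using closed_kernel_bounded_linear[OF T] linear_subspace_kernel[OF T[THEN bounded_linear.linear]]
    by blast+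
  have "\<exists>C. \<forall>x. infdist x N \<le> C * norm (x - K x)"
  proof (rule ccontr)
    assume "\<nexists>C. \<forall>x. infdist x N \<le> C * norm (x - K x)"
    then have "\<forall>k. \<exists>x. real (Suc k) * norm (x - K x) < infdist x N"
      by (meson not_le)
    then obtain x where x: "\<And>k. real (Suc k) * norm (x k - K (x k)) < infdist (x k) N"
      by metis
    define d where "d k = infdist (x k) N" for k
    have d: "d k > 0" for k
    proof -
      have "0 \<le> real (Suc k) * norm (x k - K (x k))"
        by simp
      then show ?thesis
        using x[of k] unfolding d_def by linarith
    qed
    then have "x k \<notin> N" for k
      unfolding d_def by (metis infdist_zero less_irrefl)
    then have "\<exists>z\<in>N. norm ((1 / d k) *\<^sub>R (x k - z)) \<le> 2 \<and> (\<forall>a\<in>N. 1 \<le> norm ((1 / d k) *\<^sub>R (x k - z) - a))"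
      for k
      unfolding d_def using N by (intro scaled_representative_far_from_subspace)
    then obtain z where z: "\<And>k. z k \<in> N" "\<And>k. norm ((1 / d k) *\<^sub>R (x k - z k)) \<le> 2"
      "\<And>k a. a \<in> N \<Longrightarrow> 1 \<le> norm ((1 / d k) *\<^sub>R (x k - z k) - a)"
      by metis
    define v where "v k = (1 / d k) *\<^sub>R (x k - z k)" for k
    have "(\<lambda>k. v k - K (v k)) \<longlonglongrightarrow> 0"
    proof (rule Lim_null_comparison)
      have "norm (v k - K (v k)) = norm (x k - K (x k)) / d k" for k
        using z(1)[of k] d[of k] unfolding v_def N_def
        by (simp add: K.diff K.scale algebra_simps flip: scaleR_diff_right)
      also have "\<dots> k \<le> inverse (real (Suc k))" for k
        using x[of k] d[of k] unfolding d_def[symmetric] by (simp add: field_simps)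
      finally show "\<forall>\<^sub>F k in sequentially. norm (v k - K (v k)) \<le> inverse (real (Suc k))"
        by simp
    qed (rule LIMSEQ_inverse_real_of_nat)
    with z(2)[folded v_def] show False
      by (rule id_minus_compact_op_approximate_kernel_not_separated[OF K])
        (use z(3)[folded v_def] in \<open>auto simp: N_def\<close>)
  qed
  then show thesis
    using that unfolding N_def by blast
qed

lemma closed_range_id_minus_compact_op:
  fixes K :: "'a::real_normed_vector \<Rightarrow> 'a"
  assumes K: "compact_op K"
  shows "closed (range (\<lambda>x. x - K x))"
  unfolding closed_sequential_limits
proof (intro allI impI, elim conjE)
  interpret K: bounded_linear K
    using K by (rule compact_op_imp_bounded_linear)
  have T: "bounded_linear (\<lambda>x. x - K x)"
    by (intro bounded_linear_sub bounded_linear_ident K.bounded_linear)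
  fix y :: "nat \<Rightarrow> 'a" and l
  assume "\<forall>n. y n \<in> range (\<lambda>x. x - K x)" and lim: "y \<longlonglongrightarrow> l"
  then have "\<forall>n. \<exists>x. y n = x - K x"
    by blast
  then obtain x where x: "\<And>n. y n = x n - K (x n)"
    by metis
  define N where "N = {x. x - K x = 0}"
  have "closed N"
    unfolding N_def by (rule closed_kernel_bounded_linear[OF T])
  moreover have "0 \<in> N"
    unfolding N_def by (simp add: K.zero)
  ultimately have "\<exists>z\<in>N. norm (x n - z) \<le> 2 * infdist (x n) N" for n
    using exists_point_within_twice_infdist by blast
  then obtain z where z: "\<And>n. z n \<in> N" "\<And>n. norm (x n - z n) \<le> 2 * infdist (x n) N"
    by metis
  obtain C where C: "\<And>x. infdist x N \<le> C * norm (x - K x)"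
    using id_minus_compact_op_infdist_kernel_le[OF K, folded N_def] by blast
  obtain M where M: "\<And>n. norm (y n) \<le> M"
    using convergent_imp_bounded[OF lim] unfolding bounded_iff by blast
  define w where "w n = x n - z n" for n
  have w: "w n - K (w n) = y n" for n
    using z(1)[of n] x[of n] unfolding w_def N_def by (simp add: K.diff algebra_simps)
  have "norm (w n) \<le> 2 * (\<bar>C\<bar> * M)" for n
  proof -
    have "C * norm (y n) \<le> \<bar>C\<bar> * M"
      by (rule order_trans[OF mult_right_mono[OF abs_ge_self norm_ge_zero] mult_left_mono[OF M abs_ge_zero]])
    then show ?thesis
      using z(2)[of n] C[of "x n"] x[of n] unfolding w_def by simp
  qed
  moreover have "(\<lambda>n. w n - K (w n)) \<longlonglongrightarrow> l"
    using lim by (simp add: w)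
  ultimately obtain r u where "strict_mono r" "(\<lambda>n. w (r n)) \<longlonglongrightarrow> u" "u - K u = l"
    by (rule id_minus_compact_op_bounded_sequence_limit[OF K])
  then show "l \<in> range (\<lambda>x. x - K x)"
    by blast
qed

section \<open>Riesz--Schauder theory\<close>

lemma compact_op_funpow_id_minus:
  fixes K :: "'a::real_normed_vector \<Rightarrow> 'a"
  assumes K: "compact_op K"
  shows "\<exists>K'. compact_op K' \<and> (\<lambda>x. x - K x) ^^ n = (\<lambda>x. x - K' x)"
proof (induction n)
  case 0
  have "(\<lambda>x. x - K x) ^^ 0 = (\<lambda>x. x - 0)"
    by (simp add: id_def)
  then show ?case
    using compact_op_zero by blast
next
  case (Suc n)
  then obtain K' where K': "compact_op K'" "(\<lambda>x. x - K x) ^^ n = (\<lambda>x. x - K' x)"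
    by blast
  have "bounded_linear (\<lambda>x. x - K' x)"
    using K'(1) by (intro bounded_linear_sub bounded_linear_ident compact_op_imp_bounded_linear)
  then have "compact_op (\<lambda>x. K (x - K' x))"
    using K by (rule compact_op_compose_right)
  then have "compact_op (\<lambda>x. K' x + K (x - K' x))"
    by (rule compact_op_add[OF K'(1)])
  moreover have "(\<lambda>x. x - K x) ^^ Suc n = (\<lambda>x. x - (K' x + K (x - K' x)))"
    using K'(2) by (simp add: comp_def algebra_simps)
  ultimately show ?case
    by blast
qed

lemma linear_funpow:
  fixes f :: "'a::real_vector \<Rightarrow> 'a"
  shows "linear f \<Longrightarrow> linear (f ^^ n)"
  by (induction n) (simp_all add: linear_id linear_compose)

lemma funpow_kernel_mono:
  fixes f :: "'a \<Rightarrow> 'a::zero"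
  assumes "f 0 = 0" and "m \<le> n"
  shows "{x. (f ^^ m) x = 0} \<subseteq> {x. (f ^^ n) x = 0}"
proof -
  have zero: "(f ^^ k) 0 = 0" for k
    using assms(1) by (induction k) simp_all
  have "(f ^^ n) x = (f ^^ (n - m)) ((f ^^ m) x)" for x
    using assms(2) by (simp flip: funpow_add[unfolded o_def, THEN fun_cong])
  then show ?thesis
    using zero by auto
qed

lemma funpow_range_antimono:
  fixes f :: "'a \<Rightarrow> 'a"
  assumes "m \<le> n"
  shows "range (f ^^ n) \<subseteq> range (f ^^ m)"
proof -
  have "(f ^^ n) x = (f ^^ m) ((f ^^ (n - m)) x)" for x
    using assms by (simp flip: funpow_add[unfolded o_def, THEN fun_cong])
  then show ?thesis
    by (metis rangeI image_subsetI)
qed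

lemma funpow_kernel_stationary:
  fixes f :: "'a \<Rightarrow> 'a::zero"
  assumes "{x. (f ^^ Suc p) x = 0} = {x. (f ^^ p) x = 0}" and "p \<le> n"
  shows "{x. (f ^^ n) x = 0} = {x. (f ^^ p) x = 0}"
  using assms(2)
proof (induction n rule: dec_induct)
  case (step n)
  have "{x. (f ^^ Suc n) x = 0} = f -` {x. (f ^^ n) x = 0}"
    by (auto simp del: funpow.simps simp: funpow_Suc_right)
  also have "\<dots> = {x. (f ^^ Suc p) x = 0}"
    by (auto simp del: funpow.simps simp: funpow_Suc_right step.IH)
  finally show ?case
    using assms(1) by simp
qed simp

lemma funpow_range_stationary:
  fixes f :: "'a \<Rightarrow> 'a"
  assumes "range (f ^^ Suc q) = range (f ^^ q)" and "q \<le> n"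
  shows "range (f ^^ n) = range (f ^^ q)"
  using assms(2)
proof (induction n rule: dec_induct)
  case (step n)
  have "range (f ^^ Suc n) = f ` range (f ^^ n)"
    by (simp add: image_comp)
  also have "\<dots> = range (f ^^ Suc q)"
    by (simp add: image_comp step.IH)
  finally show ?case
    using assms(1) by simp
qed simp

lemma linear_funpow_kernel_range_complement:
  fixes f :: "'a::real_vector \<Rightarrow> 'a"
  assumes f: "linear f"
    and ker: "{x. (f ^^ (m + m)) x = 0} = {x. (f ^^ m) x = 0}"
    and ran: "range (f ^^ (m + m)) = range (f ^^ m)"
  shows "{x. (f ^^ m) x = 0} \<inter> range (f ^^ m) = {0}"
    and "{x. (f ^^ m) x = 0} + range (f ^^ m) = UNIV"
proof -
  have lin: "linear (f ^^ m)"
    using f by (rule linear_funpow)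
  show "{x. (f ^^ m) x = 0} \<inter> range (f ^^ m) = {0}"
  proof (intro equalityI subsetI)
    fix x
    assume "x \<in> {x. (f ^^ m) x = 0} \<inter> range (f ^^ m)"
    then obtain y where y: "x = (f ^^ m) y" "(f ^^ m) ((f ^^ m) y) = 0"
      by blast
    then have "y \<in> {x. (f ^^ (m + m)) x = 0}"
      by (simp add: funpow_add)
    then show "x \<in> {0}"
      using ker y(1) by simp
  qed (use linear_0[OF lin] in auto)
  show "{x. (f ^^ m) x = 0} + range (f ^^ m) = UNIV"
  proof (intro equalityI subsetI)
    fix x :: 'a
    have "(f ^^ m) x \<in> range (f ^^ (m + m))"
      using ran by blast
    then obtain y where y: "(f ^^ m) x = (f ^^ m) ((f ^^ m) y)"
      by (auto simp: funpow_add)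
    then have "x - (f ^^ m) y \<in> {x. (f ^^ m) x = 0}"
      by (simp add: linear_diff[OF lin])
    then have "(x - (f ^^ m) y) + (f ^^ m) y \<in> {x. (f ^^ m) x = 0} + range (f ^^ m)"
      by (intro set_plus_intro) auto
    then show "x \<in> {x. (f ^^ m) x = 0} + range (f ^^ m)"
      by simp
  qed simp
qed

lemma funpow_kernel_range_invariant:
  fixes f :: "'a \<Rightarrow> 'a::zero"
  assumes "f 0 = 0" and "0 < m"
  defines "N \<equiv> {x. (f ^^ m) x = 0}" and "R \<equiv> range (f ^^ m)"
  shows "f ` N \<subseteq> N" "f ` R \<subseteq> R" "R \<subseteq> range f" "{x. f x = 0} \<subseteq> N"
proof -
  show "f ` N \<subseteq> N"
  proof
    fix y
    assume "y \<in> f ` N"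
    then obtain x where "y = f x" "(f ^^ m) x = 0"
      unfolding N_def by blast
    then show "y \<in> N"
      using \<open>f 0 = 0\<close> unfolding N_def by (simp flip: funpow_swap1)
  qed
  have "f ` R \<subseteq> range (f ^^ Suc m)"
    unfolding R_def by auto
  then show "f ` R \<subseteq> R"
    unfolding R_def using funpow_range_antimono[of m "Suc m" f] by simp
  show "R \<subseteq> range f"
    using funpow_range_antimono[of 1 m f] \<open>0 < m\<close> unfolding R_def by simp
  show "{x. f x = 0} \<subseteq> N"
    using funpow_kernel_mono[of f 1 m] \<open>f 0 = 0\<close> \<open>0 < m\<close> unfolding N_def by simp
qed

lemma span_disjoint:
  fixes A B :: "'a::real_vector set"
  assumes "finite B" "independent (A \<union> B)" "A \<inter> B = {}"
  shows "span A \<inter> span B = {0}"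
  using assms
proof (induction B rule: finite_induct)
  case (insert b B)
  have IH: "span A \<inter> span B = {0}"
    using insert.IH insert.prems independent_mono by blast
  have "b \<notin> span (A \<union> B)"
    using insert.prems insert.hyps(2) by (simp add: independent_insert)
  have "v = 0" if v: "v \<in> span A" "v \<in> span (insert b B)" for v
  proof -
    obtain k where k: "v - k *\<^sub>R b \<in> span B"
      using v(2) by (auto simp: span_breakdown_eq)
    have "k *\<^sub>R b = v - (v - k *\<^sub>R b)"
      by simp
    also have "\<dots> \<in> span (A \<union> B)"
      using v(1) k span_mono[of A "A \<union> B"] span_mono[of B "A \<union> B"] by (blast intro: span_diff)
    finally have "k = 0"
      using \<open>b \<notin> span (A \<union> B)\<close> span_scale[of "k *\<^sub>R b" _ "1 / k"] by (cases "k = 0") auto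
    then show "v = 0"
      using IH v(1) k by auto
  qed
  then show ?case
    using span_zero by blast
qed (auto simp: span_zero)

lemma extend_to_finite_basis:
  fixes N :: "'a::real_vector set"
  assumes N: "subspace N" "finite B0" "span B0 = N" and B: "B \<subseteq> N" "independent B"
  obtains B' where "B \<subseteq> B'" "finite B'" "independent B'" "span B' = N" "card B' = dim N"
proof -
  obtain B' where B': "B \<subseteq> B'" "B' \<subseteq> N" "independent B'" "N \<subseteq> span B'"
    using maximal_independent_subset_extend[OF B] by blast
  have "finite B'"
    using independent_span_bound[OF N(2) B'(3)] B'(2) N(3) by blast
  moreover have "span B' = N"
    using B'(2,4) N(1) span_minimal by blast
  moreover have "card B' = dim N"
    by (rule basis_card_eq_dim[OF B'(2,4,3)])
  ultimately show thesis
    using that B'(1,3) by blast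
qed

lemma linear_image_complement_of_kernel_basis:
  fixes T :: "'a::real_vector \<Rightarrow> 'b::real_vector"
  assumes T: "linear T" and B: "finite B" "independent B" "BK \<subseteq> B"
    and BK: "span BK = {x. T x = 0}"
  defines "U \<equiv> B - BK"
  shows "span (T ` U) = T ` span B" "independent (T ` U)" "card (T ` U) = card U"
proof -
  interpret T: linear T
    by (rule T)
  have "span BK \<inter> span U = {0}"
    unfolding U_def using B by (intro span_disjoint) (auto simp: Un_absorb1)
  then have inj: "inj_on T (span U)"
    using BK by (auto simp: linear_inj_on_iff_eq_0[OF T subspace_span])
  have "T ` span B = T ` span U"
  proof
    show "T ` span U \<subseteq> T ` span B"
      using span_mono[of U B] unfolding U_def by blast
    show "T ` span B \<subseteq> T ` span U"
    proof
      fix y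
      assume "y \<in> T ` span B"
      moreover have "BK \<union> U = B"
        using B(3) unfolding U_def by blast
      ultimately obtain x where "x \<in> span (BK \<union> U)" "y = T x"
        by auto
      then obtain a b where "a \<in> span BK" "b \<in> span U" "y = T (a + b)"
        unfolding span_Un by blast
      then show "y \<in> T ` span U"
        using BK by (auto simp: T.add)
    qed
  qed
  then show "span (T ` U) = T ` span B"
    by (simp add: span_linear_image[OF T])
  have "independent U"
    using B(2) unfolding U_def by (rule independent_mono) auto
  then show "independent (T ` U)"
    using inj by (rule linear_independent_injective_image[OF T])
  show "card (T ` U) = card U"
    using inj_on_subset[OF inj span_superset] by (rule card_image)
qed

lemma linear_rank_nullity_complement:
  fixes T :: "'a::real_vector \<Rightarrow> 'a"
  assumes T: "linear T"
    and N: "subspace N" "finite B0" "span B0 = N" "T ` N \<subseteq> N"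
    and ker: "{x. T x = 0} \<subseteq> N" and BK: "independent BK" "span BK = {x. T x = 0}"
  obtains C where "finite C" "independent C" "span C \<inter> T ` N = {0}" "span C + T ` N = N"
    "card C = card BK"
proof -
  have "BK \<subseteq> N"
    using BK(2) ker span_superset by blast
  then obtain BN where BN: "BK \<subseteq> BN" "finite BN" "independent BN" "span BN = N" "card BN = dim N"
    using extend_to_finite_basis[OF N(1-3) _ BK(1)] by blast
  define U where "U = BN - BK"
  have TU: "span (T ` U) = T ` N" "independent (T ` U)" "card (T ` U) = card U"
    using linear_image_complement_of_kernel_basis[OF T BN(2,3,1) BK(2)] unfolding U_def BN(4) by blast+
  have "T ` U \<subseteq> N"
    using N(4) BN(4) span_superset[of BN] unfolding U_def by blast
  then obtain BN' where BN': "T ` U \<subseteq> BN'" "finite BN'" "independent BN'" "span BN' = N"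
    "card BN' = dim N"
    using extend_to_finite_basis[OF N(1-3) _ TU(2)] by blast
  define C where "C = BN' - T ` U"
  have "span C \<inter> T ` N = {0}"
    unfolding C_def TU(1)[symmetric] using BN'(1-3)
    by (intro span_disjoint) (auto simp: Un_absorb2 finite_subset)
  moreover have "span C + span (T ` U) = span (C \<union> T ` U)"
    unfolding span_Un set_plus_def by blast
  then have "span C + T ` N = N"
    using BN'(1,4) unfolding C_def TU(1)[symmetric] by (simp add: Un_absorb2)
  moreover have "card C = card BK"
  proof -
    have "finite BK"
      using BN(1,2) by (rule finite_subset)
    then have "card U = card BN - card BK"
      unfolding U_def using BN(1) by (rule card_Diff_subset)
    moreover have "card C = card BN' - card (T ` U)"
      unfolding C_def using BN'(1,2) by (intro card_Diff_subset) (auto intro: finite_subset)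
    moreover have "card BK \<le> card BN"
      using BN(1,2) by (rule card_mono[rotated])
    ultimately show ?thesis
      using BN(5) BN'(5) TU(3) by simp
  qed
  moreover have "finite C" "independent C"
    unfolding C_def using BN'(2) independent_mono[OF BN'(3)] by auto
  ultimately show thesis
    using that by blast
qed

lemma linear_range_eq_image_plus_invariant:
  fixes T :: "'a::real_vector \<Rightarrow> 'a"
  assumes T: "linear T" and "N + R = UNIV" "T ` R \<subseteq> R" "R \<subseteq> range T"
  shows "range T = T ` N + R"
proof (intro equalityI subsetI)
  interpret T: linear T
    by (rule T)
  fix y
  assume "y \<in> range T"
  then obtain x where "y = T x"
    by blast
  moreover have "x \<in> N + R"
    using assms(2) by blast
  then obtain a b where "a \<in> N" "b \<in> R" "x = a + b"
    by (rule set_plus_elim)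
  ultimately have "y = T a + T b"
    by (simp add: T.add)
  moreover have "T a \<in> T ` N" "T b \<in> R"
    using \<open>a \<in> N\<close> \<open>b \<in> R\<close> assms(3) by auto
  ultimately show "y \<in> T ` N + R"
    by (simp add: set_plus_intro)
next
  interpret T: linear T
    by (rule T)
  fix y
  assume "y \<in> T ` N + R"
  then obtain a b where "a \<in> N" "b \<in> R" "y = T a + b"
    by (auto elim: set_plus_elim)
  moreover obtain b' where "b = T b'"
    using assms(4) \<open>b \<in> R\<close> by blast
  ultimately have "y = T (a + b')"
    by (simp add: T.add)
  then show "y \<in> range T"
    by blast
qed

lemma complement_extend_direct_sum:
  fixes V W N R :: "'a::real_vector set"
  assumes VW: "subspace V" "subspace W" "V \<inter> W = {0}" "V + W = N"
    and NR: "N \<inter> R = {0}" "N + R = UNIV"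
  shows "V \<inter> (W + R) = {0}" "V + (W + R) = UNIV"
proof -
  have "N = {v + w |v w. v \<in> V \<and> w \<in> W}"
    unfolding VW(4)[symmetric] set_plus_def by blast
  then have "subspace N"
    using subspace_sums[OF VW(1,2)] by simp
  have "V \<subseteq> N" "W \<subseteq> N"
    using set_zero_plus2[OF subspace_0[OF VW(2)], of V] set_zero_plus2[OF subspace_0[OF VW(1)], of W] VW(4)
    by (simp_all add: add.commute)
  have "v = 0" if "v \<in> V" "v \<in> W + R" for v
  proof -
    obtain w r where wr: "w \<in> W" "r \<in> R" "v = w + r"
      using \<open>v \<in> W + R\<close> by (rule set_plus_elim)
    have "v \<in> N" "w \<in> N"
      using \<open>V \<subseteq> N\<close> \<open>W \<subseteq> N\<close> \<open>v \<in> V\<close> wr(1) by blast+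
    then have "v - w \<in> N"
      by (rule subspace_diff[OF \<open>subspace N\<close>])
    then have "r \<in> N \<inter> R"
      using wr(2,3) by simp
    then have "v \<in> V \<inter> W"
      using NR(1) wr(1,3) \<open>v \<in> V\<close> by simp
    then show "v = 0"
      using VW(3) by blast
  qed
  moreover have "0 + 0 \<in> W + R"
    using subspace_0[OF VW(2)] NR(1) by (intro set_plus_intro) auto
  ultimately show "V \<inter> (W + R) = {0}"
    using subspace_0[OF VW(1)] by force
  show "V + (W + R) = UNIV"
    using VW(4) NR(2) by (simp add: add.assoc[symmetric])
qed

lemma linear_index_zero_of_invariant_complement:
  fixes T :: "'a::real_vector \<Rightarrow> 'a"
  assumes T: "linear T"
    and NR: "subspace N" "subspace R" "N \<inter> R = {0}" "N + R = UNIV"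
    and invariant: "T ` N \<subseteq> N" "T ` R \<subseteq> R" and R: "R \<subseteq> range T"
    and N: "finite B0" "span B0 = N" and ker: "{x. T x = 0} \<subseteq> N"
    and BK: "independent BK" "span BK = {x. T x = 0}"
  obtains C where "finite C" "independent C" "span C \<inter> range T = {0}"
    "span C + range T = UNIV" "card C = card BK"
proof -
  obtain C where C: "finite C" "independent C" "span C \<inter> T ` N = {0}" "span C + T ` N = N"
    "card C = card BK"
    using linear_rank_nullity_complement[OF T NR(1) N invariant(1) ker BK] by blast
  have "subspace (T ` N)"
    using T NR(1) by (rule linear_subspace_image)
  then have "span C \<inter> (T ` N + R) = {0}" "span C + (T ` N + R) = UNIV"
    using complement_extend_direct_sum[OF subspace_span _ C(3,4) NR(3,4)] by blast+
  then show thesis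
    using that C(1,2,5) linear_range_eq_image_plus_invariant[OF T NR(4) invariant(2) R] by simp
qed

lemma closed_kernel_range_funpow_id_minus_compact_op:
  fixes K :: "'a::real_normed_vector \<Rightarrow> 'a"
  assumes K: "compact_op K"
  defines "T \<equiv> \<lambda>x. x - K x"
  shows "closed {x. (T ^^ n) x = 0}" "closed (range (T ^^ n))"
proof -
  obtain K' where K': "compact_op K'" "T ^^ n = (\<lambda>x. x - K' x)"
    using compact_op_funpow_id_minus[OF K] unfolding T_def by blast
  have "bounded_linear (\<lambda>x. x - K' x)"
    using K'(1) by (intro bounded_linear_sub bounded_linear_ident compact_op_imp_bounded_linear)
  then have "closed {x. x - K' x = 0}"
    by (rule closed_kernel_bounded_linear)
  then show "closed {x. (T ^^ n) x = 0}"
    unfolding K'(2) .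
  show "closed (range (T ^^ n))"
    unfolding K'(2) by (rule closed_range_id_minus_compact_op[OF K'(1)])
qed

lemma id_minus_compact_op_finite_ascent:
  fixes K :: "'a::real_normed_vector \<Rightarrow> 'a"
  assumes K: "compact_op K"
  defines "T \<equiv> \<lambda>x. x - K x"
  shows "\<exists>p. {x. (T ^^ Suc p) x = 0} = {x. (T ^^ p) x = 0}"
proof (rule id_minus_compact_op_ascending_chain_stationary[OF K])
  interpret K: bounded_linear K
    using K by (rule compact_op_imp_bounded_linear)
  fix n x
  have "linear T"
    unfolding T_def by (intro bounded_linear.linear bounded_linear_sub bounded_linear_ident K.bounded_linear)
  then show "subspace {x. (T ^^ n) x = 0}"
    by (intro linear_subspace_kernel linear_funpow)
  show "closed {x. (T ^^ n) x = 0}"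
    using closed_kernel_range_funpow_id_minus_compact_op[OF K] unfolding T_def by blast
  have "T 0 = 0"
    unfolding T_def by (simp add: K.zero)
  then show "{x. (T ^^ n) x = 0} \<subseteq> {x. (T ^^ Suc n) x = 0}"
    by (rule funpow_kernel_mono) simp
  assume "x \<in> {x. (T ^^ Suc n) x = 0}"
  then show "x - K x \<in> {x. (T ^^ n) x = 0}"
    unfolding T_def by (simp add: funpow_Suc_right del: funpow.simps)
qed

lemma id_minus_compact_op_finite_descent:
  fixes K :: "'a::real_normed_vector \<Rightarrow> 'a"
  assumes K: "compact_op K"
  defines "T \<equiv> \<lambda>x. x - K x"
  shows "\<exists>q. range (T ^^ Suc q) = range (T ^^ q)"
proof (rule id_minus_compact_op_descending_chain_stationary[OF K])
  interpret K: bounded_linear K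
    using K by (rule compact_op_imp_bounded_linear)
  fix n x
  have "linear T"
    unfolding T_def by (intro bounded_linear.linear bounded_linear_sub bounded_linear_ident K.bounded_linear)
  then show "subspace (range (T ^^ n))"
    by (intro linear_subspace_image linear_funpow subspace_UNIV)
  show "closed (range (T ^^ n))"
    using closed_kernel_range_funpow_id_minus_compact_op[OF K] unfolding T_def by blast
  show "range (T ^^ Suc n) \<subseteq> range (T ^^ n)"
    by (rule funpow_range_antimono) simp
  assume "x \<in> range (T ^^ n)"
  then obtain z where "x = (T ^^ n) z"
    by blast
  then have "x - K x = (T ^^ Suc n) z"
    unfolding T_def by simp
  then show "x - K x \<in> range (T ^^ Suc n)"
    by blast
qed

lemma id_minus_compact_op_ascent_descent:
  fixes K :: "'a::real_normed_vector \<Rightarrow> 'a"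
  assumes K: "compact_op K"
  defines "T \<equiv> \<lambda>x. x - K x"
  obtains m where "0 < m"
    "{x. (T ^^ (m + m)) x = 0} = {x. (T ^^ m) x = 0}"
    "range (T ^^ (m + m)) = range (T ^^ m)"
proof -
  obtain p q where p: "{x. (T ^^ Suc p) x = 0} = {x. (T ^^ p) x = 0}"
    and q: "range (T ^^ Suc q) = range (T ^^ q)"
    using id_minus_compact_op_finite_ascent[OF K] id_minus_compact_op_finite_descent[OF K]
    unfolding T_def by blast
  define m where "m = Suc (p + q)"
  have ker: "{x. (T ^^ n) x = 0} = {x. (T ^^ p) x = 0}" if "m \<le> n" for n
    using that unfolding m_def by (intro funpow_kernel_stationary[OF p]) simp
  have ran: "range (T ^^ n) = range (T ^^ q)" if "m \<le> n" for n
    using that unfolding m_def by (intro funpow_range_stationary[OF q]) simp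
  show thesis
  proof (rule that[of m])
    show "{x. (T ^^ (m + m)) x = 0} = {x. (T ^^ m) x = 0}"
      by (rule trans[OF ker sym[OF ker]]) simp_all
    show "range (T ^^ (m + m)) = range (T ^^ m)"
      by (rule trans[OF ran sym[OF ran]]) simp_all
  qed (simp add: m_def)
qed

theorem fredholm_index_zero_id_minus_compact_op:
  fixes K :: "'a::banach \<Rightarrow> 'a"
  assumes K: "compact_op K"
  shows "fredholm_index_zero (\<lambda>x. x - K x)"
proof -
  interpret K: bounded_linear K
    using K by (rule compact_op_imp_bounded_linear)
  define T where "T = (\<lambda>x. x - K x)"
  have "bounded_linear T"
    unfolding T_def by (intro bounded_linear_sub bounded_linear_ident K.bounded_linear)
  then have "linear T"
    by (rule bounded_linear.linear)
  obtain m where m: "0 < m" "{x. (T ^^ (m + m)) x = 0} = {x. (T ^^ m) x = 0}"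
    "range (T ^^ (m + m)) = range (T ^^ m)"
    using id_minus_compact_op_ascent_descent[OF K] unfolding T_def by blast
  define N where "N = {x. (T ^^ m) x = 0}"
  define R where "R = range (T ^^ m)"
  have subspaces: "subspace N" "subspace R"
    unfolding N_def R_def using \<open>linear T\<close>
    by (simp_all add: linear_subspace_kernel linear_subspace_image linear_funpow)
  obtain K' where K': "compact_op K'" "T ^^ m = (\<lambda>x. x - K' x)"
    using compact_op_funpow_id_minus[OF K] unfolding T_def by blast
  then obtain BN where BN: "finite BN" "span BN = N"
    using compact_op_fixed_subspace_finite_basis[OF K'(1) subspaces(1)] unfolding N_def by auto
  obtain BK where BK: "finite BK" "independent BK" "span BK = {x. T x = 0}"
    using compact_op_fixed_subspace_finite_basis[OF K linear_subspace_kernel[OF \<open>linear T\<close>]]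
    unfolding T_def by auto
  have NR: "N \<inter> R = {0}" "N + R = UNIV"
    unfolding N_def R_def by (rule linear_funpow_kernel_range_complement[OF \<open>linear T\<close> m(2,3)])+
  have "T 0 = 0"
    using \<open>linear T\<close> by (rule linear_0)
  then have invariant: "T ` N \<subseteq> N" "T ` R \<subseteq> R" "R \<subseteq> range T" "{x. T x = 0} \<subseteq> N"
    unfolding N_def R_def by (rule funpow_kernel_range_invariant[OF _ m(1)])+
  obtain C where C: "finite C" "independent C" "span C \<inter> range T = {0}"
    "span C + range T = UNIV" "card C = card BK"
    by (rule linear_index_zero_of_invariant_complement[OF \<open>linear T\<close> subspaces NR invariant(1-3) BN invariant(4) BK(2,3)])
  have "closed (range T)"
    unfolding T_def by (rule closed_range_id_minus_compact_op[OF K])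
  then show ?thesis
    unfolding fredholm_index_zero_def T_def[symmetric] using \<open>bounded_linear T\<close> BK C
    by (intro conjI exI[of _ BK] exI[of _ C]) simp_all
qed

section \<open>Isomorphisms\<close>

lemma isom_inv:
  fixes P :: "'a::real_normed_vector \<Rightarrow> 'b::real_normed_vector"
  shows "isom P \<Longrightarrow> isom (inv P)"
  unfolding isom_def by (simp add: bij_imp_bij_inv inv_inv_eq)

lemma isom_compose:
  fixes P :: "'b::real_normed_vector \<Rightarrow> 'c::real_normed_vector"
    and Q :: "'a::real_normed_vector \<Rightarrow> 'b"
  assumes P: "isom P" and Q: "isom Q"
  shows "isom (\<lambda>x. P (Q x))"
proof -
  have "bij P" "bij Q"
    using P Q unfolding isom_def by auto
  then have "bij (P \<circ> Q)" "inv (P \<circ> Q) = inv Q \<circ> inv P"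
    by (simp_all add: bij_comp o_inv_distrib)
  then show ?thesis
    using P Q unfolding isom_def by (auto simp: o_def intro: bounded_linear_compose)
qed

lemma linear_image_set_plus:
  assumes "linear P"
  shows "P ` (X + Y) = P ` X + P ` Y"
proof -
  interpret linear P
    by (rule assms)
  show ?thesis
    unfolding set_plus_image image_image
    by (auto simp: add image_iff split_def intro!: image_eqI)
qed

lemma closed_image_isom:
  fixes P :: "'a::real_normed_vector \<Rightarrow> 'b::real_normed_vector"
  assumes P: "isom P" and "closed S"
  shows "closed (P ` S)"
proof -
  have "bij P" "bounded_linear (inv P)"
    using P unfolding isom_def by auto
  have "P ` S = inv P -` S"
  proof
    show "P ` S \<subseteq> inv P -` S"
      using bij_is_inj[OF \<open>bij P\<close>] by (auto simp: inv_f_f)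
    show "inv P -` S \<subseteq> P ` S"
    proof
      fix y
      assume "y \<in> inv P -` S"
      then have "P (inv P y) \<in> P ` S"
        by blast
      then show "y \<in> P ` S"
        using \<open>bij P\<close> by (simp add: bij_is_surj surj_f_inv_f)
    qed
  qed
  then show ?thesis
    using \<open>closed S\<close> linear_continuous_on[OF \<open>bounded_linear (inv P)\<close>] by (simp add: closed_vimage)
qed

lemma fredholm_index_zero_isom_compose:
  fixes T P :: "'a::banach \<Rightarrow> 'a"
  assumes T: "fredholm_index_zero T" and P: "isom P"
  shows "fredholm_index_zero (\<lambda>x. P (T x))"
proof -
  have "bounded_linear P" "bij P"
    using P unfolding isom_def by auto
  interpret P: bounded_linear P
    by (rule \<open>bounded_linear P\<close>)
  have "inj P"
    using \<open>bij P\<close> by (rule bij_is_inj)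
  obtain B C where BC: "finite B" "independent B" "span B = {x. T x = 0}" "finite C" "independent C"
    "span C \<inter> range T = {0}" "span C + range T = UNIV" "card B = card C"
    using T unfolding fredholm_index_zero_def by blast
  have range_PT: "range (\<lambda>x. P (T x)) = P ` range T"
    by (simp add: image_image)
  have "closed (range (\<lambda>x. P (T x)))"
    unfolding range_PT using T unfolding fredholm_index_zero_def by (blast intro: closed_image_isom[OF P])
  moreover have "P y = 0 \<longleftrightarrow> y = 0" for y
    using inj_eq[OF \<open>inj P\<close>, of y 0] P.zero by simp
  then have "{x. P (T x) = 0} = {x. T x = 0}"
    by simp
  moreover have "span (P ` C) \<inter> range (\<lambda>x. P (T x)) = {0}"
    using BC(6) image_Int[OF \<open>inj P\<close>, of "span C" "range T"] P.zero
    by (simp add: span_linear_image[OF P.linear] range_PT)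
  moreover have "span (P ` C) + range (\<lambda>x. P (T x)) = UNIV"
    using BC(7) linear_image_set_plus[OF P.linear, of "span C" "range T"] \<open>bij P\<close>
    by (simp add: span_linear_image[OF P.linear] range_PT bij_is_surj)
  moreover have "independent (P ` C)" "card (P ` C) = card C" "finite (P ` C)"
    using linear_independent_injective_image[OF P.linear BC(5)] inj_on_subset[OF \<open>inj P\<close>]
      card_image[of P C] BC(4) by auto
  ultimately show ?thesis
    using bounded_linear_compose[OF \<open>bounded_linear P\<close>] T BC(1-3,8) unfolding fredholm_index_zero_def
    by (intro conjI exI[of _ B] exI[of _ "P ` C"]) auto
qed

lemma fredholm_index_zero_isom_minus_compact_op:
  fixes P K :: "'a::banach \<Rightarrow> 'a"
  assumes P: "isom P" and K: "compact_op K"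
  shows "fredholm_index_zero (\<lambda>x. P x - K x)"
proof -
  have P': "bounded_linear P" "bij P" "bounded_linear (inv P)"
    using P unfolding isom_def by auto
  have "compact_op (\<lambda>x. inv P (K x))"
    using P'(3) K by (rule compact_op_compose_left)
  then have "fredholm_index_zero (\<lambda>x. P (x - inv P (K x)))"
    by (rule fredholm_index_zero_isom_compose[OF fredholm_index_zero_id_minus_compact_op P])
  moreover have "P (x - inv P (K x)) = P x - K x" for x
    using P'(2) by (simp add: linear_diff[OF bounded_linear.linear[OF P'(1)]] bij_is_surj surj_f_inv_f)
  ultimately show ?thesis
    by simp
qed

section \<open>The derivative of F\<close>

definition F_map_deriv ::
  "('e1::real_normed_vector \<Rightarrow>\<^sub>L 'e0::real_normed_vector) \<Rightarrow> ('e1 \<Rightarrow>\<^sub>L 'es::real_normed_vector)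
    \<Rightarrow> ('f::real_normed_vector \<Rightarrow> ('e1 \<Rightarrow>\<^sub>L 'e0)) \<Rightarrow> ('f \<Rightarrow> ('f \<Rightarrow>\<^sub>L ('e1 \<Rightarrow>\<^sub>L 'e0)))
    \<Rightarrow> ('f \<Rightarrow> ('e1 \<Rightarrow>\<^sub>L 'et::real_normed_vector)) \<Rightarrow> ('f \<Rightarrow> ('f \<Rightarrow>\<^sub>L ('e1 \<Rightarrow>\<^sub>L 'et)))
    \<Rightarrow> ('e1 \<Rightarrow> 'f) \<Rightarrow> ('et \<Rightarrow> 'es) \<Rightarrow> real \<Rightarrow> 'e1 \<Rightarrow> 'e1 \<Rightarrow> 'e1" where
  "F_map_deriv D \<gamma>0 A A' l l' \<iota> j lam u h =
     h - S_op D \<gamma>0 A 0 ((A 0 - A (\<iota> u)) h - A' (\<iota> u) (\<iota> h) u,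
                        lam *\<^sub>R j (l (\<iota> u) h + l' (\<iota> u) (\<iota> h) u))"

lemma F_map_has_derivative:
  fixes \<iota> :: "'e1::real_normed_vector \<Rightarrow> 'f::real_normed_vector"
    and j :: "'et::real_normed_vector \<Rightarrow> 'es::real_normed_vector"
    and A :: "'f \<Rightarrow> ('e1 \<Rightarrow>\<^sub>L 'e0::real_normed_vector)" and l :: "'f \<Rightarrow> ('e1 \<Rightarrow>\<^sub>L 'et)"
    and A' :: "'f \<Rightarrow> ('f \<Rightarrow>\<^sub>L ('e1 \<Rightarrow>\<^sub>L 'e0))" and l' :: "'f \<Rightarrow> ('f \<Rightarrow>\<^sub>L ('e1 \<Rightarrow>\<^sub>L 'et))"
    and D :: "'e1 \<Rightarrow>\<^sub>L 'e0" and \<gamma>0 :: "'e1 \<Rightarrow>\<^sub>L 'es"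
  assumes \<iota>: "bounded_linear \<iota>" and j: "bounded_linear j"
    and S: "bounded_linear (S_op D \<gamma>0 A 0)"
    and A: "(A has_derivative A' (\<iota> u)) (at (\<iota> u))"
    and l: "(l has_derivative l' (\<iota> u)) (at (\<iota> u))"
  shows "(F_map D \<gamma>0 A l \<iota> j lam has_derivative F_map_deriv D \<gamma>0 A A' l l' \<iota> j lam u) (at u)"
proof -
  have "((\<lambda>v. A (\<iota> v)) has_derivative (\<lambda>h. A' (\<iota> u) (\<iota> h))) (at u)"
    using has_derivative_compose[OF bounded_linear_imp_has_derivative[OF \<iota>] A] .
  then have "((\<lambda>v. A 0 - A (\<iota> v)) has_derivative (\<lambda>h. 0 - A' (\<iota> u) (\<iota> h))) (at u)"
    by (rule has_derivative_diff[OF has_derivative_const])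
  then have A\<iota>: "((\<lambda>v. (A 0 - A (\<iota> v)) v) has_derivative
      (\<lambda>h. (A 0 - A (\<iota> u)) h + (0 - A' (\<iota> u) (\<iota> h)) u)) (at u)"
    by (rule bounded_bilinear.FDERIV[OF bounded_bilinear_blinfun_apply _ has_derivative_ident])
  have "((\<lambda>v. l (\<iota> v)) has_derivative (\<lambda>h. l' (\<iota> u) (\<iota> h))) (at u)"
    using has_derivative_compose[OF bounded_linear_imp_has_derivative[OF \<iota>] l] .
  then have "((\<lambda>v. l (\<iota> v) v) has_derivative (\<lambda>h. l (\<iota> u) h + l' (\<iota> u) (\<iota> h) u)) (at u)"
    by (rule bounded_bilinear.FDERIV[OF bounded_bilinear_blinfun_apply _ has_derivative_ident])
  then have "((\<lambda>v. lam *\<^sub>R j (l (\<iota> v) v)) has_derivative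
      (\<lambda>h. lam *\<^sub>R j (l (\<iota> u) h + l' (\<iota> u) (\<iota> h) u))) (at u)"
    by (rule has_derivative_scaleR_right[OF bounded_linear.has_derivative[OF j]])
  with A\<iota> have "(F_map D \<gamma>0 A l \<iota> j lam has_derivative (\<lambda>h. h - S_op D \<gamma>0 A 0
      ((A 0 - A (\<iota> u)) h + (0 - A' (\<iota> u) (\<iota> h)) u, lam *\<^sub>R j (l (\<iota> u) h + l' (\<iota> u) (\<iota> h) u)))) (at u)"
    unfolding F_map_def[abs_def]
    by (intro has_derivative_diff[OF has_derivative_ident] bounded_linear.has_derivative[OF S]
        has_derivative_Pair)
  then show ?thesis
    by (rule has_derivative_eq_rhs) (simp add: fun_eq_iff F_map_deriv_def blinfun.diff_left blinfun.minus_left)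
qed

text \<open>The part of \<open>(1 - \<alpha>) F\<^sub>u(\<lambda>, 0) + \<alpha> F\<^sub>u(\<lambda>, u)\<close> that factors through \<open>\<iota>\<close> or \<open>j\<close>.\<close>

definition F_map_deriv_perturbation ::
  "('f::real_normed_vector \<Rightarrow> ('f \<Rightarrow>\<^sub>L ('e1::real_normed_vector \<Rightarrow>\<^sub>L 'e0::real_normed_vector)))
    \<Rightarrow> ('f \<Rightarrow> ('e1 \<Rightarrow>\<^sub>L 'et::real_normed_vector)) \<Rightarrow> ('f \<Rightarrow> ('f \<Rightarrow>\<^sub>L ('e1 \<Rightarrow>\<^sub>L 'et)))
    \<Rightarrow> ('e1 \<Rightarrow> 'f) \<Rightarrow> ('et \<Rightarrow> 'es::real_normed_vector) \<Rightarrow> real \<Rightarrow> real \<Rightarrow> 'e1 \<Rightarrow> 'e1 \<Rightarrow> 'e0 \<times> 'es"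
  where
  "F_map_deriv_perturbation A' l l' \<iota> j lam \<alpha> u h =
     (- \<alpha> *\<^sub>R A' (\<iota> u) (\<iota> h) u,
      lam *\<^sub>R j ((1 - \<alpha>) *\<^sub>R l 0 h + \<alpha> *\<^sub>R (l (\<iota> u) h + l' (\<iota> u) (\<iota> h) u)))"

lemma compact_op_F_map_deriv_perturbation:
  fixes \<iota> :: "'e1::real_normed_vector \<Rightarrow> 'f::real_normed_vector"
    and j :: "'et::real_normed_vector \<Rightarrow> 'es::real_normed_vector"
    and A' :: "'f \<Rightarrow> ('f \<Rightarrow>\<^sub>L ('e1 \<Rightarrow>\<^sub>L 'e0::real_normed_vector))"
  assumes \<iota>: "compact_op \<iota>" and j: "compact_op j"
  shows "compact_op (F_map_deriv_perturbation A' l l' \<iota> j lam \<alpha> u)"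
proof -
  have apply_at: "bounded_linear (\<lambda>y. B y w)" for B :: "'f \<Rightarrow>\<^sub>L ('e1 \<Rightarrow>\<^sub>L 'x::real_normed_vector)" and w
    by (rule bounded_linear_compose[OF blinfun.bounded_linear_left blinfun.bounded_linear_right])
  have "bounded_linear (\<lambda>y. - \<alpha> *\<^sub>R A' (\<iota> u) y u)"
    by (rule bounded_linear_const_scaleR[OF apply_at])
  then have "compact_op (\<lambda>h. - \<alpha> *\<^sub>R A' (\<iota> u) (\<iota> h) u)"
    using \<iota> by (rule compact_op_compose_left)
  moreover have "bounded_linear (\<lambda>h. (1 - \<alpha>) *\<^sub>R l 0 h + \<alpha> *\<^sub>R (l (\<iota> u) h + l' (\<iota> u) (\<iota> h) u))"
    using compact_op_imp_bounded_linear[OF \<iota>]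
    by (intro bounded_linear_add bounded_linear_const_scaleR blinfun.bounded_linear_right
        bounded_linear_compose[OF apply_at])
  then have "compact_op (\<lambda>h. j ((1 - \<alpha>) *\<^sub>R l 0 h + \<alpha> *\<^sub>R (l (\<iota> u) h + l' (\<iota> u) (\<iota> h) u)))"
    using j by (rule compact_op_compose_right)
  then have "compact_op (\<lambda>h. lam *\<^sub>R j ((1 - \<alpha>) *\<^sub>R l 0 h + \<alpha> *\<^sub>R (l (\<iota> u) h + l' (\<iota> u) (\<iota> h) u)))"
    by (rule compact_op_compose_left[OF bounded_linear_scaleR_right])
  ultimately show ?thesis
    unfolding F_map_deriv_perturbation_def[abs_def] by (rule compact_op_Pair)
qed

lemma F_map_deriv_convex_combination:
  fixes \<iota> :: "'e1::real_normed_vector \<Rightarrow> 'f::real_normed_vector"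
    and j :: "'et::real_normed_vector \<Rightarrow> 'es::real_normed_vector"
    and A :: "'f \<Rightarrow> ('e1 \<Rightarrow>\<^sub>L 'e0::real_normed_vector)" and l :: "'f \<Rightarrow> ('e1 \<Rightarrow>\<^sub>L 'et)"
    and A' :: "'f \<Rightarrow> ('f \<Rightarrow>\<^sub>L ('e1 \<Rightarrow>\<^sub>L 'e0))" and l' :: "'f \<Rightarrow> ('f \<Rightarrow>\<^sub>L ('e1 \<Rightarrow>\<^sub>L 'et))"
    and D :: "'e1 \<Rightarrow>\<^sub>L 'e0" and \<gamma>0 :: "'e1 \<Rightarrow>\<^sub>L 'es"
  assumes \<iota>: "linear \<iota>" and j: "linear j" and M0: "isom (\<lambda>h. (D h + A 0 h, \<gamma>0 h))"
  shows "(1 - \<alpha>) *\<^sub>R F_map_deriv D \<gamma>0 A A' l l' \<iota> j lam 0 h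
        + \<alpha> *\<^sub>R F_map_deriv D \<gamma>0 A A' l l' \<iota> j lam u h
      = S_op D \<gamma>0 A 0 ((D h + ((1 - \<alpha>) *\<^sub>R A 0 + \<alpha> *\<^sub>R A (\<iota> u)) h, \<gamma>0 h)
          - F_map_deriv_perturbation A' l l' \<iota> j lam \<alpha> u h)"
proof -
  interpret \<iota>: linear \<iota>
    by (rule \<iota>)
  interpret j: linear j
    by (rule j)
  define S where "S = S_op D \<gamma>0 A 0"
  have S_def': "S = inv (\<lambda>h. (D h + A 0 h, \<gamma>0 h))"
    unfolding S_def S_op_def ..
  interpret S: bounded_linear S
    using isom_inv[OF M0] unfolding S_def' isom_def by blast
  have "inj (\<lambda>h. (D h + A 0 h, \<gamma>0 h))"
    using M0 unfolding isom_def by (simp add: bij_is_inj)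
  then have S_M0: "S (D h + A 0 h, \<gamma>0 h) = h"
    unfolding S_def' by (rule inv_f_f)
  have "(1 - \<alpha>) *\<^sub>R F_map_deriv D \<gamma>0 A A' l l' \<iota> j lam 0 h
        + \<alpha> *\<^sub>R F_map_deriv D \<gamma>0 A A' l l' \<iota> j lam u h
      = S ((D h + A 0 h, \<gamma>0 h) - (1 - \<alpha>) *\<^sub>R (0, lam *\<^sub>R j (l 0 h))
          - \<alpha> *\<^sub>R ((A 0 - A (\<iota> u)) h - A' (\<iota> u) (\<iota> h) u, lam *\<^sub>R j (l (\<iota> u) h + l' (\<iota> u) (\<iota> h) u)))"
    unfolding F_map_deriv_def S_def[symmetric] S.diff S.scaleR S_M0
    by (simp add: \<iota>.zero algebra_simps)
  also have "\<dots> = S ((D h + ((1 - \<alpha>) *\<^sub>R A 0 + \<alpha> *\<^sub>R A (\<iota> u)) h, \<gamma>0 h)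
      - F_map_deriv_perturbation A' l l' \<iota> j lam \<alpha> u h)"
    unfolding F_map_deriv_perturbation_def
    by (simp add: prod_eq_iff j.add j.diff j.scaleR blinfun.add_left blinfun.diff_left
        blinfun.scaleR_left algebra_simps)
  finally show ?thesis
    unfolding S_def .
qed

lemma fredholm_index_zero_F_map_deriv_convex_combination:
  fixes \<iota> :: "'e1::banach \<Rightarrow> 'f::real_normed_vector"
    and j :: "'et::real_normed_vector \<Rightarrow> 'es::banach"
    and A :: "'f \<Rightarrow> ('e1 \<Rightarrow>\<^sub>L 'e0::banach)" and l :: "'f \<Rightarrow> ('e1 \<Rightarrow>\<^sub>L 'et)"
    and A' :: "'f \<Rightarrow> ('f \<Rightarrow>\<^sub>L ('e1 \<Rightarrow>\<^sub>L 'e0))" and l' :: "'f \<Rightarrow> ('f \<Rightarrow>\<^sub>L ('e1 \<Rightarrow>\<^sub>L 'et))"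
    and D :: "'e1 \<Rightarrow>\<^sub>L 'e0" and \<gamma>0 :: "'e1 \<Rightarrow>\<^sub>L 'es"
  assumes \<iota>: "compact_op \<iota>" and j: "compact_op j"
    and M0: "isom (\<lambda>h. (D h + A 0 h, \<gamma>0 h))"
    and M\<alpha>: "isom (\<lambda>h. (D h + ((1 - \<alpha>) *\<^sub>R A 0 + \<alpha> *\<^sub>R A (\<iota> u)) h, \<gamma>0 h))"
  shows "fredholm_index_zero (\<lambda>h. (1 - \<alpha>) *\<^sub>R F_map_deriv D \<gamma>0 A A' l l' \<iota> j lam 0 h
      + \<alpha> *\<^sub>R F_map_deriv D \<gamma>0 A A' l l' \<iota> j lam u h)"
proof -
  have S: "isom (S_op D \<gamma>0 A 0)"
    unfolding S_op_def using M0 by (rule isom_inv)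
  then have "bounded_linear (S_op D \<gamma>0 A 0)"
    unfolding isom_def by blast
  then have "compact_op (\<lambda>h. S_op D \<gamma>0 A 0 (F_map_deriv_perturbation A' l l' \<iota> j lam \<alpha> u h))"
    using compact_op_F_map_deriv_perturbation[OF \<iota> j] by (rule compact_op_compose_left)
  with isom_compose[OF S M\<alpha>]
  have "fredholm_index_zero (\<lambda>h. S_op D \<gamma>0 A 0 (D h + ((1 - \<alpha>) *\<^sub>R A 0 + \<alpha> *\<^sub>R A (\<iota> u)) h, \<gamma>0 h)
      - S_op D \<gamma>0 A 0 (F_map_deriv_perturbation A' l l' \<iota> j lam \<alpha> u h))"
    by (rule fredholm_index_zero_isom_minus_compact_op)
  moreover have "linear \<iota>" "linear j" "linear (S_op D \<gamma>0 A 0)"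
    using \<iota> j \<open>bounded_linear (S_op D \<gamma>0 A 0)\<close>
    by (simp_all add: compact_op_imp_bounded_linear bounded_linear.linear)
  then have "(1 - \<alpha>) *\<^sub>R F_map_deriv D \<gamma>0 A A' l l' \<iota> j lam 0 h
        + \<alpha> *\<^sub>R F_map_deriv D \<gamma>0 A A' l l' \<iota> j lam u h
      = S_op D \<gamma>0 A 0 (D h + ((1 - \<alpha>) *\<^sub>R A 0 + \<alpha> *\<^sub>R A (\<iota> u)) h, \<gamma>0 h)
      - S_op D \<gamma>0 A 0 (F_map_deriv_perturbation A' l l' \<iota> j lam \<alpha> u h)" for h
    by (simp add: F_map_deriv_convex_combination[where A = A, OF _ _ M0] linear_diff)
  ultimately show ?thesis
    by simp
qed

theorem lemma3p2:
  fixes \<iota> :: "'E1::banach \<Rightarrow> 'F::banach"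
    and j :: "'Et::banach \<Rightarrow> 'Es::banach"
    and D :: "'E1 \<Rightarrow>\<^sub>L 'E0::banach"
    and \<gamma>0 :: "'E1 \<Rightarrow>\<^sub>L 'Es"
    and \<Sigma> :: "'F set"
    and A :: "'F \<Rightarrow> ('E1 \<Rightarrow>\<^sub>L 'E0)"
    and A' :: "'F \<Rightarrow> ('F \<Rightarrow>\<^sub>L ('E1 \<Rightarrow>\<^sub>L 'E0))"
    and l :: "'F \<Rightarrow> ('E1 \<Rightarrow>\<^sub>L 'Et)"
    and l' :: "'F \<Rightarrow> ('F \<Rightarrow>\<^sub>L ('E1 \<Rightarrow>\<^sub>L 'Et))"
  assumes emb_F: "compact_embedding \<iota>"
    and emb_theta: "compact_embedding j"
    and Sigma_open: "open \<Sigma>" and Sigma_conn: "connected \<Sigma>" and Sigma_0: "0 \<in> \<Sigma>"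
    and A_deriv: "\<forall>z\<in>\<Sigma>. (A has_derivative blinfun_apply (A' z)) (at z)"
    and A'_cont: "continuous_on \<Sigma> A'"
    and l_deriv: "\<forall>z\<in>\<Sigma>. (l has_derivative blinfun_apply (l' z)) (at z)"
    and l'_cont: "continuous_on \<Sigma> l'"
    and convexity: "\<forall>u. \<iota> u \<in> \<Sigma> \<longrightarrow> (\<forall>\<alpha>\<in>{0..1::real}.
          isom (\<lambda>h. (D h + ((1 - \<alpha>) *\<^sub>R A 0 + \<alpha> *\<^sub>R A (\<iota> u)) h, \<gamma>0 h)))"
  shows "\<forall>lam::real. \<forall>u. \<iota> u \<in> \<Sigma> \<longrightarrow> (\<forall>\<alpha>\<in>{0..1::real}.
           (\<exists>F0 F1. (F_map D \<gamma>0 A l \<iota> j lam has_derivative F0) (at 0) \<and>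
                    (F_map D \<gamma>0 A l \<iota> j lam has_derivative F1) (at u) \<and>
                    fredholm_index_zero (\<lambda>h. (1 - \<alpha>) *\<^sub>R F0 h + \<alpha> *\<^sub>R F1 h)))"
proof (intro allI impI ballI)
  fix lam :: real and u \<alpha>
  assume u: "\<iota> u \<in> \<Sigma>" and \<alpha>: "\<alpha> \<in> {0..1::real}"
  have \<iota>: "compact_op \<iota>" and j: "compact_op j"
    using emb_F emb_theta unfolding compact_embedding_def by blast+
  have M0: "isom (\<lambda>h. (D h + A 0 h, \<gamma>0 h))"
    using convexity u by (metis (no_types) atLeastAtMost_iff diff_zero scaleR_one scaleR_zero_left
        add.right_neutral zero_le_one order_refl)
  have S: "bounded_linear (S_op D \<gamma>0 A 0)"
    using isom_inv[OF M0] unfolding S_op_def isom_def by blast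
  have "\<iota> 0 = 0"
    using \<iota> by (simp add: compact_op_imp_bounded_linear linear_simps)
  then have "(F_map D \<gamma>0 A l \<iota> j lam has_derivative F_map_deriv D \<gamma>0 A A' l l' \<iota> j lam z) (at z)"
    if "z \<in> {0, u}" for z
    using that u Sigma_0 A_deriv l_deriv
    by (intro F_map_has_derivative[OF compact_op_imp_bounded_linear[OF \<iota>] compact_op_imp_bounded_linear[OF j] S])
      auto
  moreover have "fredholm_index_zero (\<lambda>h. (1 - \<alpha>) *\<^sub>R F_map_deriv D \<gamma>0 A A' l l' \<iota> j lam 0 h
      + \<alpha> *\<^sub>R F_map_deriv D \<gamma>0 A A' l l' \<iota> j lam u h)"
    using convexity u \<alpha> by (intro fredholm_index_zero_F_map_deriv_convex_combination[where A = A, OF \<iota> j M0]) blast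
  ultimately show "\<exists>F0 F1. (F_map D \<gamma>0 A l \<iota> j lam has_derivative F0) (at 0) \<and>
      (F_map D \<gamma>0 A l \<iota> j lam has_derivative F1) (at u) \<and>
      fredholm_index_zero (\<lambda>h. (1 - \<alpha>) *\<^sub>R F0 h + \<alpha> *\<^sub>R F1 h)"
    by blast
qed

end
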